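(* Let $X\subset[0,1]$ with $\overline{\dim}_B(X)=a$. Then $\max\{1,2a\}\le\overline{\dim}_{GB}(X)\le a+1$.
   Context: For $\delta>0$ and $F\subset\mathbb{R}^d$, $N_\delta(F)$ is the number of cubes of the standard $\delta$-grid in $\mathbb{R}^d$ that intersect $F$, and $\overline{\dim}_B(F)=\limsup_{\delta\to0}\frac{\log N_\delta(F)}{-\log\delta}$. $C_u(X)$ is the set of uniformly continuous real functions on $X$, $\mathrm{graph}(f)=\{(x,f(x)):x\in X\}$, and $\overline{\dim}_{GB}(X)=\sup_{f\in C_u(X)}\overline{\dim}_B(\mathrm{graph}(f))$. *)

theory Defs
  imports "HOL-Analysis.Analysis"
begin

text \<open>The cube of the standard \<delta>-grid with integer index vector k (only the values of
  k on the Basis matter): the product of the half-open intervals [k_b \<delta>, (k_b+1) \<delta>).\<close>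
definition grid_cube :: "real \<Rightarrow> ('a::euclidean_space \<Rightarrow> int) \<Rightarrow> 'a set" where
  "grid_cube \<delta> k = {x. \<forall>b\<in>Basis. of_int (k b) * \<delta> \<le> x \<bullet> b \<and> x \<bullet> b < (of_int (k b) + 1) * \<delta>}"

definition grid_count :: "real \<Rightarrow> 'a::euclidean_space set \<Rightarrow> nat" where
  "grid_count \<delta> F = card {C. \<exists>k. C = grid_cube \<delta> k \<and> C \<inter> F \<noteq> {}}"

definition upper_box_dim :: "'a::euclidean_space set \<Rightarrow> ereal" where
  "upper_box_dim F = Limsup (at_right 0) (\<lambda>\<delta>. ereal (ln (real (grid_count \<delta> F)) / (- ln \<delta>)))"

definition graph_on :: "'a set \<Rightarrow> ('a \<Rightarrow> 'b) \<Rightarrow> ('a \<times> 'b) set" where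
  "graph_on X f = {(x, f x) | x. x \<in> X}"

definition upper_graph_box_dim :: "real set \<Rightarrow> ereal" where
  "upper_graph_box_dim X =
     (SUP f \<in> {f :: real \<Rightarrow> real. uniformly_continuous_on X f}. upper_box_dim (graph_on X f))"

end

theory Submission
  imports Defs
begin

text \<open>
  Upper bound: above each \<open>\<delta>\<close>-cell of \<open>X\<close> the graph of a function bounded by \<open>M\<close> meets at
  most \<open>2M/\<delta> + 2\<close> cells, so \<open>N\<^sub>\<delta>(graph f) \<lesssim> N\<^sub>\<delta>(X) \<delta>\<^sup>-\<^sup>1\<close>.

  Lower bound: call a finite set of graph points \<open>(x, y x)\<close>, \<open>x \<in> P\<close>, a pattern of exponent \<open>c\<close>
  at scale \<open>\<epsilon>\<close> if distinct points are \<open>\<epsilon>\<close>-apart in some coordinate (hence lie in distinct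
  \<open>\<epsilon>\<close>-cells) and there are at least \<open>\<epsilon>\<^sup>-\<^sup>c\<close> of them. Near an accumulation point of \<open>X\<close> a
  staircase of \<open>\<lceil>\<epsilon>\<^sup>-\<^sup>c\<rceil>\<close> points at heights \<open>0, \<epsilon>, 2\<epsilon>, \<dots>\<close> is a pattern of height
  \<open>\<epsilon>\<^sup>1\<^sup>-\<^sup>c\<close>, for any \<open>c < 1\<close>. By compactness, for \<open>b < dim\<^sub>B X\<close> some point \<open>p\<close> has every
  punctured neighbourhood of dimension above \<open>b\<close>; there choose a scale \<open>\<eta>\<close> with more than \<open>\<eta>\<^sup>-\<^sup>b\<close> occupied
  cells, keep one point in each occupied cell of one parity, and give the point in cell \<open>k\<close>
  the height \<open>\<epsilon> ((k div 2) mod M)\<close> where \<open>\<epsilon> = \<eta>\<^sup>\<gamma>\<close> and \<open>M \<approx> \<eta>\<^sup>\<gamma>\<^sup>-\<^sup>1\<close>: points with equal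
  heights are at least \<open>M\<eta> \<ge> \<epsilon>\<close> apart, which yields patterns for any \<open>c < 2b\<close>.
  Patterns of heights tending to \<open>0\<close>, placed in disjoint annuli shrinking to the point,
  extend by Tietze's theorem to a continuous function on \<open>\<real>\<close>, uniformly continuous on the
  bounded set \<open>X\<close>, whose graph has upper box dimension at least \<open>c\<close>.
\<close>

section \<open>Counting grid cells on the line and in the plane\<close>

lemma grid_count_eq_card_index:
  assumes cube: "\<And>k. grid_cube \<delta> k = idx -` {\<iota> k}" and "surj \<iota>"
  shows "grid_count \<delta> F = card (idx ` F)"
proof -
  have "{C. \<exists>k. C = grid_cube \<delta> k \<and> C \<inter> F \<noteq> {}} = (\<lambda>i. idx -` {i}) ` idx ` F"
  proof (intro equalityI subsetI)
    fix C assume "C \<in> {C. \<exists>k. C = grid_cube \<delta> k \<and> C \<inter> F \<noteq> {}}"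
    then obtain k x where "C = idx -` {\<iota> k}" "x \<in> C" "x \<in> F"
      by (auto simp: cube)
    then show "C \<in> (\<lambda>i. idx -` {i}) ` idx ` F"
      by (metis IntI image_eqI vimage_singleton_eq)
  next
    fix C assume "C \<in> (\<lambda>i. idx -` {i}) ` idx ` F"
    then obtain x where x: "x \<in> F" "C = idx -` {idx x}"
      by auto
    obtain k where "idx x = \<iota> k"
      using \<open>surj \<iota>\<close> by (metis surjD)
    then show "C \<in> {C. \<exists>k. C = grid_cube \<delta> k \<and> C \<inter> F \<noteq> {}}"
      using x by (auto simp: cube)
  qed
  moreover have "inj_on (\<lambda>i. idx -` {i}) (idx ` F)"
    by (rule inj_onI) blast
  ultimately show ?thesis
    unfolding grid_count_def by (simp add: card_image)
qed

lemma grid_count_real: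
  assumes "\<delta> > 0"
  shows "grid_count \<delta> (F :: real set) = card ((\<lambda>x. \<lfloor>x / \<delta>\<rfloor>) ` F)"
proof (rule grid_count_eq_card_index)
  show "grid_cube \<delta> k = (\<lambda>x. \<lfloor>x / \<delta>\<rfloor>) -` {k 1}" for k
    using assms by (simp add: grid_cube_def set_eq_iff floor_eq_iff pos_le_divide_eq pos_divide_less_eq)
  show "surj (\<lambda>k :: real \<Rightarrow> int. k 1)"
    by (rule surjI[where f = "\<lambda>j _. j"]) (rule refl)
qed

lemma grid_count_real_pair:
  assumes "\<delta> > 0"
  shows "grid_count \<delta> (G :: (real \<times> real) set) = card ((\<lambda>(x, y). (\<lfloor>x / \<delta>\<rfloor>, \<lfloor>y / \<delta>\<rfloor>)) ` G)"
proof (rule grid_count_eq_card_index)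
  show "grid_cube \<delta> k = (\<lambda>(x, y). (\<lfloor>x / \<delta>\<rfloor>, \<lfloor>y / \<delta>\<rfloor>)) -` {(k (1, 0), k (0, 1))}" for k
    using assms by (simp add: grid_cube_def Basis_prod_def set_eq_iff floor_eq_iff
        pos_le_divide_eq pos_divide_less_eq conj_ac)
  show "surj (\<lambda>k :: real \<times> real \<Rightarrow> int. (k (1, 0), k (0, 1)))"
    by (rule surjI[where f = "\<lambda>(i, j) v. if v = (1, 0) then i else j"]) auto
qed

lemma finite_floor_image:
  assumes "bounded (F :: real set)" "\<delta> > 0"
  shows "finite ((\<lambda>x. \<lfloor>x / \<delta>\<rfloor>) ` F)"
proof -
  obtain B where B: "\<And>x. x \<in> F \<Longrightarrow> \<bar>x\<bar> \<le> B"
    using assms(1) by (auto simp: bounded_real)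
  have "(\<lambda>x. \<lfloor>x / \<delta>\<rfloor>) ` F \<subseteq> {\<lfloor>-B / \<delta>\<rfloor>..\<lfloor>B / \<delta>\<rfloor>}"
  proof (rule image_subsetI)
    fix x assume "x \<in> F"
    then have "-B \<le> x" "x \<le> B" using B by fastforce+
    then show "\<lfloor>x / \<delta>\<rfloor> \<in> {\<lfloor>-B / \<delta>\<rfloor>..\<lfloor>B / \<delta>\<rfloor>}"
      using assms(2) by (auto intro!: floor_mono simp: divide_right_mono field_simps)
  qed
  then show ?thesis
    by (rule finite_subset) simp
qed

lemma dist_less_if_floor_eq:
  fixes x x' \<delta> :: real
  assumes "0 < \<delta>" "\<lfloor>x / \<delta>\<rfloor> = \<lfloor>x' / \<delta>\<rfloor>"
  shows "\<bar>x - x'\<bar> < \<delta>"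
proof -
  have "\<bar>x / \<delta> - x' / \<delta>\<bar> < 1"
    using assms(2) floor_correct[of "x / \<delta>"] floor_correct[of "x' / \<delta>"]
    unfolding abs_less_iff by linarith
  then show ?thesis
    using assms(1) by (simp add: diff_divide_distrib[symmetric] abs_divide pos_divide_less_eq)
qed

lemma dist_gt_of_floor_diff:
  fixes x x' \<delta> :: real
  assumes "0 < \<delta>"
  shows "(of_int \<bar>\<lfloor>x / \<delta>\<rfloor> - \<lfloor>x' / \<delta>\<rfloor>\<bar> - 1) * \<delta> < \<bar>x - x'\<bar>"
proof -
  have "of_int \<bar>\<lfloor>x / \<delta>\<rfloor> - \<lfloor>x' / \<delta>\<rfloor>\<bar> - 1 < \<bar>x / \<delta> - x' / \<delta>\<bar>"
    using floor_correct[of "x / \<delta>"] floor_correct[of "x' / \<delta>"]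
    unfolding abs_if by (auto; linarith)
  then show ?thesis
    using assms by (simp add: diff_divide_distrib[symmetric] abs_divide pos_less_divide_eq)
qed

section \<open>Calculus of the upper box dimension\<close>

lemma ln_of_nat_mono: "m \<le> n \<Longrightarrow> ln (real m) \<le> ln (real n)"
  by (cases "m = 0"; cases "n = 0") auto

lemma eventually_at_right_0_less_1: "eventually (\<lambda>\<delta>. 0 < \<delta> \<and> \<delta> < 1) (at_right (0::real))"
  using eventually_at_right_real[of 0 1] by simp

lemma tendsto_div_neg_ln_at_right_0: "((\<lambda>\<delta>. C / (- ln \<delta>)) \<longlongrightarrow> 0) (at_right (0::real))"
proof (rule tendsto_divide_0)
  show "((\<lambda>\<delta>. C) \<longlongrightarrow> C) (at_right 0)"
    by simp
  show "filterlim (\<lambda>\<delta>. - ln \<delta>) at_infinity (at_right (0::real))"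
    by (rule filterlim_at_top_imp_at_infinity,
        rule filterlim_compose[OF filterlim_uminus_at_top_at_bot ln_at_0])
qed

lemma eventually_powr_less_at_right_0:
  assumes "0 < q" "0 < t"
  shows "eventually (\<lambda>\<eta>. \<eta> powr q < t) (at_right (0::real))"
proof -
  have "((\<lambda>\<eta>. \<eta> powr q) \<longlongrightarrow> 0) (at_right (0::real))"
    using assms(1) by (intro tendsto_zero_powrI tendsto_ident_at tendsto_const)
      (auto simp: eventually_at_right_less eventually_at_filter)
  then show ?thesis
    using assms(2) by (rule order_tendstoD(2))
qed

lemma Limsup_le_plus_vanishing:
  fixes f g h :: "'a \<Rightarrow> real"
  assumes "F \<noteq> bot" "(g \<longlongrightarrow> 0) F" "eventually (\<lambda>x. f x \<le> h x + g x) F"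
  shows "Limsup F (\<lambda>x. ereal (f x)) \<le> Limsup F (\<lambda>x. ereal (h x))"
proof (rule ereal_le_epsilon2)
  fix e :: real
  assume "0 < e"
  with assms(2) have "eventually (\<lambda>x. g x < e) F"
    by (rule order_tendstoD(2))
  with assms(3) have "eventually (\<lambda>x. ereal (f x) \<le> ereal (h x) + ereal e) F"
    by eventually_elim simp
  then have "Limsup F (\<lambda>x. ereal (f x)) \<le> Limsup F (\<lambda>x. ereal (h x) + ereal e)"
    by (rule Limsup_mono)
  also have "\<dots> = Limsup F (\<lambda>x. ereal (h x)) + ereal e"
    using assms(1) by (rule Limsup_add_ereal_right) simp
  finally show "Limsup F (\<lambda>x. ereal (f x)) \<le> Limsup F (\<lambda>x. ereal (h x)) + ereal e" .
qed

definition box_ratio :: "real \<Rightarrow> 'a::euclidean_space set \<Rightarrow> real" where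
  "box_ratio \<delta> F = ln (real (grid_count \<delta> F)) / (- ln \<delta>)"

lemma upper_box_dim_eq_Limsup_box_ratio:
  "upper_box_dim F = Limsup (at_right 0) (\<lambda>\<delta>. ereal (box_ratio \<delta> F))"
  by (simp add: upper_box_dim_def box_ratio_def)

lemma le_box_ratio_iff:
  assumes "0 < \<delta>" "\<delta> < 1"
  shows "c \<le> box_ratio \<delta> F \<longleftrightarrow> c * (- ln \<delta>) \<le> ln (real (grid_count \<delta> F))"
  unfolding box_ratio_def by (rule pos_le_divide_eq) (use assms in simp)

lemma box_ratio_le_iff:
  assumes "0 < \<delta>" "\<delta> < 1"
  shows "box_ratio \<delta> F \<le> c \<longleftrightarrow> ln (real (grid_count \<delta> F)) \<le> c * (- ln \<delta>)"
  unfolding box_ratio_def by (rule pos_divide_le_eq) (use assms in simp)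

lemma upper_box_dim_mono:
  fixes A B :: "real set"
  assumes "A \<subseteq> B" "bounded B"
  shows "upper_box_dim A \<le> upper_box_dim B"
  unfolding upper_box_dim_eq_Limsup_box_ratio
proof (rule Limsup_mono)
  show "eventually (\<lambda>\<delta>. ereal (box_ratio \<delta> A) \<le> ereal (box_ratio \<delta> B)) (at_right 0)"
    using eventually_at_right_0_less_1
  proof eventually_elim
    case (elim \<delta>)
    have "grid_count \<delta> A \<le> grid_count \<delta> B"
      using elim assms by (simp add: grid_count_real card_mono finite_floor_image image_mono)
    then show ?case
      using elim unfolding box_ratio_def ereal_less_eq(3)
      by (intro divide_right_mono ln_of_nat_mono) auto
  qed
qed

lemma ln_of_nat_le_ln_2_plus_max:
  assumes "k \<le> m + n"
  shows "ln (real k) \<le> ln 2 + max (ln (real m)) (ln (real n))"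
proof (cases "max m n = 0")
  case True
  then show ?thesis using assms by simp
next
  case False
  have "ln (real k) \<le> ln (real (2 * max m n))"
    using assms by (intro ln_of_nat_mono) simp
  also have "\<dots> = ln 2 + ln (real (max m n))"
    using False by (simp add: ln_mult)
  also have "ln (real (max m n)) = max (ln (real m)) (ln (real n))"
    using ln_of_nat_mono[of m n] ln_of_nat_mono[of n m] by (auto simp: max_def)
  finally show ?thesis .
qed

lemma upper_box_dim_Un_le:
  fixes A B :: "real set"
  assumes "bounded A" "bounded B" "upper_box_dim A \<le> b" "upper_box_dim B \<le> b"
  shows "upper_box_dim (A \<union> B) \<le> b"
proof -
  have "upper_box_dim (A \<union> B)
      \<le> Limsup (at_right 0) (\<lambda>\<delta>. ereal (max (box_ratio \<delta> A) (box_ratio \<delta> B)))"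
    unfolding upper_box_dim_eq_Limsup_box_ratio
  proof (rule Limsup_le_plus_vanishing[OF _ tendsto_div_neg_ln_at_right_0[of "ln 2"]])
    show "eventually (\<lambda>\<delta>. box_ratio \<delta> (A \<union> B)
        \<le> max (box_ratio \<delta> A) (box_ratio \<delta> B) + ln 2 / (- ln \<delta>)) (at_right 0)"
      using eventually_at_right_0_less_1
    proof eventually_elim
      case (elim \<delta>)
      have "grid_count \<delta> (A \<union> B) \<le> grid_count \<delta> A + grid_count \<delta> B"
        using elim by (simp add: grid_count_real image_Un card_Un_le)
      then have "ln (real (grid_count \<delta> (A \<union> B)))
          \<le> ln 2 + max (ln (real (grid_count \<delta> A))) (ln (real (grid_count \<delta> B)))"
        by (rule ln_of_nat_le_ln_2_plus_max)
      then have "box_ratio \<delta> (A \<union> B)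
          \<le> (max (ln (real (grid_count \<delta> A))) (ln (real (grid_count \<delta> B))) + ln 2) / (- ln \<delta>)"
        using elim unfolding box_ratio_def by (intro divide_right_mono) auto
      then show ?case
        using elim by (simp add: box_ratio_def max_divide_distrib_right add_divide_distrib)
    qed
  qed simp
  also have "\<dots> \<le> b"
    unfolding Limsup_le_iff
  proof (intro allI impI)
    fix y assume "b < y"
    then have "eventually (\<lambda>\<delta>. ereal (box_ratio \<delta> A) < y) (at_right 0)"
      "eventually (\<lambda>\<delta>. ereal (box_ratio \<delta> B) < y) (at_right 0)"
      using assms(3,4) by (auto intro!: Limsup_lessD simp: upper_box_dim_eq_Limsup_box_ratio)
    then show "eventually (\<lambda>\<delta>. ereal (max (box_ratio \<delta> A) (box_ratio \<delta> B)) < y) (at_right 0)"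
      by eventually_elim (simp add: max_def)
  qed
  finally show ?thesis .
qed

lemma upper_box_dim_finite_le:
  fixes A :: "real set"
  assumes "finite A"
  shows "upper_box_dim A \<le> 0"
proof -
  have "upper_box_dim A \<le> Limsup (at_right (0::real)) (\<lambda>_. ereal 0)"
    unfolding upper_box_dim_eq_Limsup_box_ratio
  proof (rule Limsup_le_plus_vanishing[where h = "\<lambda>_. 0",
        OF _ tendsto_div_neg_ln_at_right_0[of "ln (card A)"]])
    show "eventually (\<lambda>\<delta>. box_ratio \<delta> A \<le> 0 + ln (real (card A)) / (- ln \<delta>)) (at_right 0)"
      using eventually_at_right_0_less_1
    proof eventually_elim
      case (elim \<delta>)
      have "grid_count \<delta> A \<le> card A"
        using elim assms by (simp add: grid_count_real card_image_le)
      then show ?case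
        using elim unfolding box_ratio_def add_0_left by (intro divide_right_mono ln_of_nat_mono) auto
    qed
  qed simp
  then show ?thesis
    by (simp add: Limsup_const zero_ereal_def)
qed

lemma upper_box_dim_UN_le:
  fixes A :: "'i \<Rightarrow> real set"
  assumes "finite I" "\<And>i. i \<in> I \<Longrightarrow> bounded (A i)" "\<And>i. i \<in> I \<Longrightarrow> upper_box_dim (A i) \<le> b"
    and "0 \<le> b"
  shows "upper_box_dim (\<Union>i\<in>I. A i) \<le> b"
  using assms
proof (induction I rule: finite_induct)
  case empty
  then show ?case
    using upper_box_dim_finite_le[of "{}"] by simp
next
  case (insert i I)
  then show ?case
    by (simp add: upper_box_dim_Un_le bounded_UN)
qed

lemma upper_box_dim_ge_of_seq:
  assumes "\<And>n. 0 < E n" "E \<longlonglongrightarrow> 0" "\<And>n. E n powr (- c) \<le> real (grid_count (E n) F)"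
  shows "ereal c \<le> upper_box_dim F"
proof (rule ccontr)
  assume "\<not> ereal c \<le> upper_box_dim F"
  then have "eventually (\<lambda>\<delta>. ereal (box_ratio \<delta> F) < ereal c) (at_right 0)"
    by (intro Limsup_lessD) (simp add: upper_box_dim_eq_Limsup_box_ratio)
  then have "eventually (\<lambda>\<delta>. 0 < \<delta> \<and> \<delta> < 1 \<and> box_ratio \<delta> F < c) (at_right 0)"
    using eventually_at_right_0_less_1 by eventually_elim simp
  moreover have "filterlim E (at_right 0) sequentially"
    using assms(1,2) by (intro tendsto_imp_filterlim_at_right) simp_all
  ultimately have "eventually (\<lambda>n. 0 < E n \<and> E n < 1 \<and> box_ratio (E n) F < c) sequentially"
    by (rule eventually_compose_filterlim)
  then obtain n where n: "0 < E n" "E n < 1" "box_ratio (E n) F < c"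
    unfolding eventually_sequentially by blast
  have "0 < real (grid_count (E n) F)"
    by (rule less_le_trans[OF _ assms(3)]) (use n(1) in simp)
  then have "ln (E n powr (- c)) \<le> ln (real (grid_count (E n) F))"
    using assms(3)[of n] n(1) by (intro ln_mono) auto
  then have "c * (- ln (E n)) \<le> ln (real (grid_count (E n) F))"
    using n(1) by (simp add: ln_powr)
  then have "c \<le> box_ratio (E n) F"
    using le_box_ratio_iff[OF n(1,2)] by blast
  then show False
    using n(3) by simp
qed

lemma frequently_powr_less_grid_count:
  assumes "0 \<le> b" "ereal b < upper_box_dim F"
  shows "\<exists>\<^sub>F \<delta> in at_right 0. \<delta> powr (- b) < real (grid_count \<delta> F)"
proof (rule ccontr)
  assume "\<not> ?thesis"
  then have "eventually (\<lambda>\<delta>. real (grid_count \<delta> F) \<le> \<delta> powr (- b)) (at_right 0)"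
    by (simp add: not_frequently not_less)
  then have "eventually (\<lambda>\<delta>. ereal (box_ratio \<delta> F) \<le> ereal b) (at_right 0)"
    using eventually_at_right_0_less_1
  proof eventually_elim
    case (elim \<delta>)
    have "ln (real (grid_count \<delta> F)) \<le> b * (- ln \<delta>)"
    proof (cases "grid_count \<delta> F = 0")
      case False
      then have "ln (real (grid_count \<delta> F)) \<le> ln (\<delta> powr (- b))"
        using elim by (intro ln_mono) auto
      then show ?thesis
        using elim by (simp add: ln_powr)
    qed (use elim assms(1) in \<open>simp add: mult_nonneg_nonpos\<close>)
    then show ?case
      using box_ratio_le_iff[of \<delta> F b] elim by simp
  qed
  then have "upper_box_dim F \<le> ereal b"
    unfolding upper_box_dim_eq_Limsup_box_ratio by (rule Limsup_bounded)
  then show False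
    using assms(2) by simp
qed

lemma ex_point_local_upper_box_dim:
  fixes X :: "real set"
  assumes "bounded X" "0 \<le> b" "ereal b < upper_box_dim X"
  obtains p where "\<And>r. r > 0 \<Longrightarrow> ereal b < upper_box_dim (X \<inter> ball p r - {p})"
proof -
  have "\<exists>p. \<forall>r>0. ereal b < upper_box_dim (X \<inter> ball p r - {p})"
  proof (rule ccontr)
    assume "\<not> ?thesis"
    then obtain R where R: "\<And>p. R p > 0" "\<And>p. upper_box_dim (X \<inter> ball p (R p) - {p}) \<le> ereal b"
      by (metis not_less)
    obtain z e where B: "X \<subseteq> cball z e"
      using assms(1) bounded_subset_cball by blast
    have "cball z e \<subseteq> (\<Union>p\<in>cball z e. ball p (R p))"
      using R(1) centre_in_ball by blast
    then obtain T where T: "T \<subseteq> cball z e" "finite T" "cball z e \<subseteq> (\<Union>p\<in>T. ball p (R p))"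
      using compactE_image[OF compact_cball, of "cball z e" "\<lambda>p. ball p (R p)"] by blast
    let ?A = "\<lambda>p. X \<inter> ball p (R p) - {p}"
    have "X \<subseteq> (\<Union>p\<in>T. ?A p) \<union> T"
      using B T(3) by blast
    then have "upper_box_dim X \<le> upper_box_dim ((\<Union>p\<in>T. ?A p) \<union> T)"
      using assms(1) T(2) by (intro upper_box_dim_mono) (auto intro: bounded_subset)
    also have "\<dots> \<le> ereal b"
      using assms T(2) R(2) order.trans[OF upper_box_dim_finite_le[OF T(2)], of "ereal b"]
      by (intro upper_box_dim_Un_le upper_box_dim_UN_le) (auto intro: bounded_subset finite_imp_bounded)
    finally show False
      using assms(3) by simp
  qed
  then show thesis
    using that by blast
qed

section \<open>Graphs of bounded functions\<close>

lemma card_floor_interval_le: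
  assumes "0 < \<delta>" "\<delta> \<le> 1" "0 \<le> M"
  shows "real (card {\<lfloor>-M / \<delta>\<rfloor>..\<lfloor>M / \<delta>\<rfloor>}) \<le> (2 * M + 2) / \<delta>"
proof -
  have "\<lfloor>M / \<delta>\<rfloor> \<le> M / \<delta>" "-M / \<delta> - 1 < \<lfloor>-M / \<delta>\<rfloor>" "0 \<le> M / \<delta>"
    using assms by (linarith, linarith, simp)
  then have "real (card {\<lfloor>-M / \<delta>\<rfloor>..\<lfloor>M / \<delta>\<rfloor>}) \<le> 2 * M / \<delta> + 2"
    by (simp add: of_nat_nat) linarith
  also have "\<dots> \<le> (2 * M + 2) / \<delta>"
    using assms by (simp add: field_simps)
  finally show ?thesis .
qed

lemma grid_count_graph_le:
  fixes X :: "real set"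
  assumes "\<delta> > 0" "bounded X" "\<And>x. x \<in> X \<Longrightarrow> \<bar>f x\<bar> \<le> M"
  shows "grid_count \<delta> (graph_on X f) \<le> grid_count \<delta> X * card {\<lfloor>-M / \<delta>\<rfloor>..\<lfloor>M / \<delta>\<rfloor>}"
proof -
  let ?I = "{\<lfloor>-M / \<delta>\<rfloor>..\<lfloor>M / \<delta>\<rfloor>}"
  have "(\<lambda>(x, y). (\<lfloor>x / \<delta>\<rfloor>, \<lfloor>y / \<delta>\<rfloor>)) ` graph_on X f \<subseteq> (\<lambda>x. \<lfloor>x / \<delta>\<rfloor>) ` X \<times> ?I"
  proof (rule subsetI)
    fix z assume "z \<in> (\<lambda>(x, y). (\<lfloor>x / \<delta>\<rfloor>, \<lfloor>y / \<delta>\<rfloor>)) ` graph_on X f"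
    then obtain x where x: "x \<in> X" "z = (\<lfloor>x / \<delta>\<rfloor>, \<lfloor>f x / \<delta>\<rfloor>)"
      by (auto simp: graph_on_def)
    have "-M \<le> f x" "f x \<le> M"
      using assms(3)[OF x(1)] by linarith+
    then have "\<lfloor>f x / \<delta>\<rfloor> \<in> ?I"
      using assms(1) by (auto intro!: floor_mono simp: field_simps)
    then show "z \<in> (\<lambda>x. \<lfloor>x / \<delta>\<rfloor>) ` X \<times> ?I"
      using x by auto
  qed
  then have "grid_count \<delta> (graph_on X f) \<le> card ((\<lambda>x. \<lfloor>x / \<delta>\<rfloor>) ` X \<times> ?I)"
    unfolding grid_count_real_pair[OF assms(1)]
    by (rule card_mono[rotated]) (simp add: finite_floor_image assms)
  then show ?thesis
    by (simp add: card_cartesian_product grid_count_real[OF assms(1)])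
qed

lemma box_ratio_graph_le:
  fixes X :: "real set"
  assumes "0 < \<delta>" "\<delta> < 1" "bounded X" "0 \<le> M" "\<And>x. x \<in> X \<Longrightarrow> \<bar>f x\<bar> \<le> M"
  shows "box_ratio \<delta> (graph_on X f) \<le> box_ratio \<delta> X + 1 + ln (2 * M + 2) / (- ln \<delta>)"
proof -
  let ?N = "real (grid_count \<delta> X)" and ?G = "real (grid_count \<delta> (graph_on X f))"
  have L: "0 < - ln \<delta>" and lnM: "0 \<le> ln (2 * M + 2)"
    using assms by simp_all
  have "?G \<le> ?N * real (card {\<lfloor>-M / \<delta>\<rfloor>..\<lfloor>M / \<delta>\<rfloor>})"
    using grid_count_graph_le[OF assms(1,3,5)] of_nat_mono by fastforce
  also have "\<dots> \<le> ?N * ((2 * M + 2) / \<delta>)"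
    using assms by (intro mult_left_mono card_floor_interval_le) auto
  finally have count: "?G \<le> ?N * ((2 * M + 2) / \<delta>)" .
  have "ln ?G \<le> ln ?N + ln (2 * M + 2) + (- ln \<delta>)"
  proof (cases "?G = 0")
    case True
    then show ?thesis
      using L lnM ln_of_nat_mono[of 0 "grid_count \<delta> X"] by simp
  next
    case False
    have "?N \<noteq> 0"
    proof
      assume "?N = 0"
      then show False
        using count False by simp
    qed
    have "ln ?G \<le> ln (?N * ((2 * M + 2) / \<delta>))"
      using False count by (intro ln_mono) auto
    also have "\<dots> = ln ?N + ln (2 * M + 2) + (- ln \<delta>)"
      using \<open>?N \<noteq> 0\<close> assms(1,4) by (simp add: ln_mult ln_div)
    finally show ?thesis .
  qed
  then have "box_ratio \<delta> (graph_on X f) \<le> (ln ?N + ln (2 * M + 2) + (- ln \<delta>)) / (- ln \<delta>)"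
    unfolding box_ratio_def using L by (intro divide_right_mono) auto
  also have "\<dots> = box_ratio \<delta> X + 1 + ln (2 * M + 2) / (- ln \<delta>)"
    using L unfolding box_ratio_def add_divide_distrib by simp
  finally show ?thesis .
qed

lemma upper_box_dim_graph_le:
  fixes X :: "real set" and f :: "real \<Rightarrow> real"
  assumes "bounded X" "uniformly_continuous_on X f"
  shows "upper_box_dim (graph_on X f) \<le> upper_box_dim X + 1"
proof -
  obtain B where B: "\<And>x. x \<in> X \<Longrightarrow> \<bar>f x\<bar> \<le> B"
    using bounded_uniformly_continuous_image[OF assms(2,1)] by (auto simp: bounded_real)
  define M where "M = max B 0"
  have M: "0 \<le> M" "\<And>x. x \<in> X \<Longrightarrow> \<bar>f x\<bar> \<le> M"
    using B by (auto simp: M_def intro: le_max_iff_disj[THEN iffD2])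
  have "upper_box_dim (graph_on X f) \<le> Limsup (at_right 0) (\<lambda>\<delta>. ereal (box_ratio \<delta> X + 1))"
    unfolding upper_box_dim_eq_Limsup_box_ratio
  proof (rule Limsup_le_plus_vanishing[OF _ tendsto_div_neg_ln_at_right_0])
    show "eventually (\<lambda>\<delta>. box_ratio \<delta> (graph_on X f)
        \<le> box_ratio \<delta> X + 1 + ln (2 * M + 2) / (- ln \<delta>)) (at_right 0)"
      using eventually_at_right_0_less_1
      by eventually_elim (use box_ratio_graph_le assms(1) M in blast)
  qed simp
  also have "\<dots> = upper_box_dim X + 1"
    unfolding upper_box_dim_eq_Limsup_box_ratio plus_ereal.simps(1)[symmetric] one_ereal_def
    by (rule Limsup_add_ereal_right) simp_all
  finally show ?thesis .
qed

section \<open>Separated graph patterns\<close>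

definition graph_separated :: "real \<Rightarrow> real set \<Rightarrow> (real \<Rightarrow> real) \<Rightarrow> bool" where
  "graph_separated \<epsilon> P y \<longleftrightarrow> (\<forall>x\<in>P. \<forall>x'\<in>P. x \<noteq> x' \<longrightarrow> \<epsilon> \<le> \<bar>x - x'\<bar> \<or> \<epsilon> \<le> \<bar>y x - y x'\<bar>)"

lemma graph_separated_int_multiple:
  assumes "0 \<le> \<epsilon>"
    and "\<And>x x'. x \<in> P \<Longrightarrow> x' \<in> P \<Longrightarrow> x \<noteq> x' \<Longrightarrow> j x = j x' \<Longrightarrow> \<epsilon> \<le> \<bar>x - x'\<bar>"
  shows "graph_separated \<epsilon> P (\<lambda>x. \<epsilon> * of_int (j x))"
  unfolding graph_separated_def
proof (intro ballI impI)
  fix x x' assume x: "x \<in> P" "x' \<in> P" "x \<noteq> x'"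
  show "\<epsilon> \<le> \<bar>x - x'\<bar> \<or> \<epsilon> \<le> \<bar>\<epsilon> * of_int (j x) - \<epsilon> * of_int (j x')\<bar>"
  proof (cases "j x = j x'")
    case False
    then have "\<epsilon> * 1 \<le> \<epsilon> * \<bar>of_int (j x) - of_int (j x')\<bar>"
      using assms(1) by (intro mult_left_mono) linarith+
    then show ?thesis
      using assms(1) by (simp add: abs_mult right_diff_distrib[symmetric])
  qed (use assms(2) x in blast)
qed

lemma card_le_grid_count_graph:
  fixes X P :: "real set" and g y :: "real \<Rightarrow> real"
  assumes "0 < \<epsilon>" "graph_separated \<epsilon> P y" "P \<subseteq> X" "\<And>x. x \<in> P \<Longrightarrow> g x = y x"
    and "bounded X" "bounded (g ` X)"
  shows "card P \<le> grid_count \<epsilon> (graph_on X g)"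
proof -
  let ?idx = "\<lambda>(x, y). (\<lfloor>x / \<epsilon>\<rfloor>, \<lfloor>y / \<epsilon>\<rfloor>)"
  have "?idx ` graph_on X g \<subseteq> (\<lambda>x. \<lfloor>x / \<epsilon>\<rfloor>) ` X \<times> (\<lambda>x. \<lfloor>x / \<epsilon>\<rfloor>) ` g ` X"
    by (auto simp: graph_on_def)
  then have fin: "finite (?idx ` graph_on X g)"
    by (rule finite_subset) (simp add: finite_floor_image assms)
  have inj: "inj_on (\<lambda>x. ?idx (x, g x)) P"
  proof (rule inj_onI, rule ccontr)
    fix x x' assume "x \<in> P" "x' \<in> P" "?idx (x, g x) = ?idx (x', g x')" "x \<noteq> x'"
    then show False
      using assms(1,2,4) dist_less_if_floor_eq[OF assms(1)] by (fastforce simp: graph_separated_def)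
  qed
  have "card P = card ((\<lambda>x. ?idx (x, g x)) ` P)"
    using card_image[OF inj] by simp
  also have "\<dots> \<le> card (?idx ` graph_on X g)"
  proof (intro card_mono[OF fin] image_subsetI)
    fix x assume "x \<in> P"
    then have "(x, g x) \<in> graph_on X g"
      using assms(3) by (auto simp: graph_on_def)
    then show "?idx (x, g x) \<in> ?idx ` graph_on X g"
      by (rule imageI)
  qed
  also have "\<dots> = grid_count \<epsilon> (graph_on X g)"
    by (simp add: grid_count_real_pair[OF assms(1)])
  finally show ?thesis .
qed

text \<open>Finiteness of \<open>P\<close> is implied: \<open>card\<close> is \<open>0\<close> on infinite sets.\<close>

definition graph_pattern ::
    "real \<Rightarrow> real \<Rightarrow> real set \<Rightarrow> real \<Rightarrow> real set \<Rightarrow> (real \<Rightarrow> real) \<Rightarrow> bool" where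
  "graph_pattern c h S \<epsilon> P y \<longleftrightarrow>
     P \<subseteq> S \<and> 0 < \<epsilon> \<and> (\<forall>x\<in>P. \<bar>y x\<bar> \<le> h) \<and> graph_separated \<epsilon> P y
     \<and> \<epsilon> powr (- c) \<le> real (card P)"

lemma graph_pattern_finite:
  assumes "graph_pattern c h S \<epsilon> P y"
  shows "finite P"
proof (rule card_ge_0_finite)
  have "0 < \<epsilon> powr (- c)"
    using assms by (simp add: graph_pattern_def)
  then show "card P > 0"
    using assms unfolding graph_pattern_def by linarith
qed

definition graph_patterns_near :: "real \<Rightarrow> real set \<Rightarrow> real \<Rightarrow> bool" where
  "graph_patterns_near c X p \<longleftrightarrow>
     (\<forall>r>0. \<forall>h>0. \<forall>t>0. \<exists>\<epsilon> P y. \<epsilon> < t \<and> graph_pattern c h (X \<inter> ball p r - {p}) \<epsilon> P y)"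

section \<open>Gluing patterns along a sequence of shrinking annuli\<close>

lemma islimpt_UN_shrinking_imp_eq:
  fixes P :: "nat \<Rightarrow> 'a::metric_space set"
  assumes "\<And>n. finite (P n)" "\<And>n x. x \<in> P n \<Longrightarrow> dist x p < 1 / real (Suc n)"
    and "q islimpt (\<Union>n. P n)"
  shows "q = p"
proof (rule ccontr)
  assume "q \<noteq> p"
  define e where "e = dist q p / 2"
  have "e > 0"
    using \<open>q \<noteq> p\<close> by (simp add: e_def)
  then obtain N where N: "N > 0" "inverse (real N) < e"
    using ex_inverse_of_nat_less by blast
  have "(\<Union>n. P n) \<inter> ball q e \<subseteq> (\<Union>n<N. P n)"
  proof
    fix x assume x: "x \<in> (\<Union>n. P n) \<inter> ball q e"
    then obtain n where n: "x \<in> P n"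
      by blast
    have "dist q p \<le> dist q x + dist x p"
      by (rule dist_triangle)
    then have "e < dist x p"
      using x by (simp add: e_def)
    with assms(2)[OF n] have "inverse (real N) < 1 / real (Suc n)"
      using N(2) by linarith
    then have "n < N"
      using N(1) by (simp add: field_simps)
    then show "x \<in> (\<Union>n<N. P n)"
      using n by blast
  qed
  moreover have "infinite ((\<Union>n. P n) \<inter> ball q e)"
    using assms(3) \<open>e > 0\<close> by (simp add: islimpt_eq_infinite_ball)
  ultimately show False
    using assms(1) by (meson finite_UN_I finite_lessThan finite_subset)
qed

lemma continuous_within_if_shrinking_bound:
  fixes F :: "'a::metric_space \<Rightarrow> real"
  assumes "\<And>N. 0 < r N" "\<And>N x. x \<in> S \<Longrightarrow> dist x p < r N \<Longrightarrow> \<bar>F x - F p\<bar> \<le> 1 / real (Suc N)"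
  shows "continuous (at p within S) F"
  unfolding continuous_within_eps_delta
proof (intro allI impI)
  fix e :: real assume "e > 0"
  then obtain N where N: "N > 0" "inverse (real N) < e"
    using ex_inverse_of_nat_less by blast
  have "1 / real (Suc N) \<le> inverse (real N)"
    using N(1) by (simp add: field_simps)
  with N(2) have "1 / real (Suc N) < e"
    by linarith
  then have "\<forall>x\<in>S. dist x p < r N \<longrightarrow> dist (F x) (F p) < e"
    using assms(2) by (fastforce simp: dist_real_def)
  then show "\<exists>d>0. \<forall>x\<in>S. dist x p < d \<longrightarrow> dist (F x) (F p) < e"
    using assms(1) by blast
qed

lemma continuous_on_if_islimpt_imp_eq:
  assumes "\<And>q. q islimpt S \<Longrightarrow> q = p" "continuous (at p within S) F"
  shows "continuous_on S F"
  unfolding continuous_on_eq_continuous_within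
proof
  fix x assume "x \<in> S"
  show "continuous (at x within S) F"
  proof (cases "x = p")
    case False
    then have "at x within S = bot"
      using assms(1) trivial_limit_within by blast
    then show ?thesis
      by (simp add: continuous_within)
  qed (use assms(2) in simp)
qed

lemma ex_continuous_extension_shrinking_pieces:
  fixes P :: "nat \<Rightarrow> real set" and Y :: "nat \<Rightarrow> real \<Rightarrow> real" and r :: "nat \<Rightarrow> real"
  assumes fin: "\<And>n. finite (P n)"
    and r: "decseq r" "\<And>n. 0 < r n" "\<And>n. r n \<le> 1 / real (Suc n)"
    and annulus: "\<And>n x. x \<in> P n \<Longrightarrow> r (Suc n) \<le> dist x p \<and> dist x p < r n"
    and small: "\<And>n x. x \<in> P n \<Longrightarrow> \<bar>Y n x\<bar> \<le> 1 / real (Suc n)"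
  obtains g where "continuous_on UNIV g" "\<And>n x. x \<in> P n \<Longrightarrow> g x = Y n x"
proof -
  have index_le: "N \<le> n" if "x \<in> P n" "dist x p < r N" for x n N
  proof (rule ccontr)
    assume "\<not> N \<le> n"
    then have "r N \<le> r (Suc n)"
      using \<open>decseq r\<close> by (simp add: decseq_def)
    then show False
      using annulus[OF that(1)] that(2) by linarith
  qed
  have disjoint: "n = m" if "x \<in> P n" "x \<in> P m" for x n m
    using index_le[OF that(1)] index_le[OF that(2)] annulus[OF that(1)] annulus[OF that(2)]
    by (meson le_antisym)
  have p_notin: "p \<notin> P n" for n
    using annulus[of p n] r(2)[of "Suc n"] by auto
  define F where "F x = (if x = p then 0 else Y (SOME n. x \<in> P n) x)" for x
  have F: "F x = Y n x" if "x \<in> P n" for x n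
  proof -
    have "(SOME n. x \<in> P n) = n"
      using that disjoint by (metis someI)
    then show ?thesis
      using that p_notin by (auto simp: F_def)
  qed
  define S where "S = insert p (\<Union>n. P n)"
  have limpt: "q = p" if "q islimpt S" for q
    using that fin annulus r(3) unfolding S_def islimpt_insert
    by (intro islimpt_UN_shrinking_imp_eq[of P]) (fastforce elim: order.strict_trans2)+
  have "continuous (at p within S) F"
  proof (rule continuous_within_if_shrinking_bound[OF r(2)])
    fix N x assume "x \<in> S" "dist x p < r N"
    show "\<bar>F x - F p\<bar> \<le> 1 / real (Suc N)"
    proof (cases "x = p")
      case False
      then obtain n where n: "x \<in> P n"
        using \<open>x \<in> S\<close> by (auto simp: S_def)
      then have "1 / real (Suc n) \<le> 1 / real (Suc N)"
        using index_le[OF n \<open>dist x p < r N\<close>] by (simp add: frac_le)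
      then show ?thesis
        using small[OF n] F[OF n] by (simp add: F_def)
    qed simp
  qed
  then have "continuous_on S F"
    using limpt by (rule continuous_on_if_islimpt_imp_eq[rotated])
  moreover have "closedin (top_of_set UNIV) S"
    using limpt unfolding closed_limpt closedin_closed_eq[OF closed_UNIV] by (auto simp: S_def)
  ultimately obtain g where g: "continuous_on UNIV g" "\<And>x. x \<in> S \<Longrightarrow> g x = F x"
    using Tietze_unbounded by blast
  show thesis
  proof (rule that[OF g(1)])
    fix n x assume "x \<in> P n"
    then show "g x = Y n x"
      using g(2)[of x] F[of x n] by (auto simp: S_def)
  qed
qed

lemma uniformly_continuous_on_subset:
  fixes f :: "'a::metric_space \<Rightarrow> 'b::metric_space"
  shows "uniformly_continuous_on T f \<Longrightarrow> S \<subseteq> T \<Longrightarrow> uniformly_continuous_on S f"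
  unfolding uniformly_continuous_on_def by (meson subsetD)

lemma continuous_on_UNIV_imp_uniformly_continuous_on_bounded:
  fixes g :: "'a::heine_borel \<Rightarrow> 'b::metric_space"
  assumes "continuous_on UNIV g" "bounded X"
  shows "uniformly_continuous_on X g"
proof -
  obtain z e where "X \<subseteq> cball z e"
    using assms(2) bounded_subset_cball by blast
  moreover have "uniformly_continuous_on (cball z e) g"
    using assms(1) by (intro compact_uniformly_continuous) (auto intro: continuous_on_subset)
  ultimately show ?thesis
    by (rule uniformly_continuous_on_subset[rotated])
qed

lemma ex_shrinking_radii:
  fixes P :: "nat \<Rightarrow> real \<Rightarrow> 'a::metric_space set"
  assumes "\<And>n r. 0 < r \<Longrightarrow> finite (P n r) \<and> p \<notin> P n r"
  obtains rad where "\<And>n. 0 < rad n" "\<And>n. rad n \<le> 1 / real (Suc n)" "decseq rad"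
    "\<And>n x. x \<in> P n (rad n) \<Longrightarrow> rad (Suc n) \<le> dist x p"
proof -
  have "\<exists>rad. \<forall>n. (0 < rad n \<and> rad n \<le> 1 / real (Suc n))
      \<and> (rad (Suc n) \<le> rad n \<and> (\<forall>x\<in>P n (rad n). rad (Suc n) \<le> dist x p))"
  proof (rule dependent_nat_choice)
    fix r n assume r: "0 < r \<and> r \<le> 1 / real (Suc n)"
    then have "finite (P n r)" "p \<notin> P n r"
      using assms by simp_all
    then obtain d where "d > 0" "\<forall>x\<in>P n r. x \<noteq> p \<longrightarrow> d \<le> dist p x"
      using finite_set_avoid by blast
    then have d: "d > 0" "\<forall>x\<in>P n r. d \<le> dist x p"
      using \<open>p \<notin> P n r\<close> by (auto simp: dist_commute)
    show "\<exists>r'. (0 < r' \<and> r' \<le> 1 / real (Suc (Suc n))) \<and> r' \<le> r \<and> (\<forall>x\<in>P n r. r' \<le> dist x p)"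
      using r d by (intro exI[of _ "min (min r (1 / real (Suc (Suc n)))) d"]) auto
  qed (auto intro!: exI[of _ 1])
  then show thesis
    using that decseq_SucI by blast
qed

lemma upper_box_dim_graph_ge_if_patterns:
  fixes X :: "real set" and g :: "real \<Rightarrow> real"
  assumes "bounded X" "uniformly_continuous_on X g" "\<epsilon> \<longlonglongrightarrow> 0"
    and "\<And>n. graph_pattern c (h n) (S n) (\<epsilon> n) (Q n) (Y n)" "\<And>n. S n \<subseteq> X"
    and "\<And>n x. x \<in> Q n \<Longrightarrow> g x = Y n x"
  shows "ereal c \<le> upper_box_dim (graph_on X g)"
proof (rule upper_box_dim_ge_of_seq[OF _ assms(3)])
  show "0 < \<epsilon> n" for n
    using assms(4) by (simp add: graph_pattern_def)
  show "\<epsilon> n powr (- c) \<le> real (grid_count (\<epsilon> n) (graph_on X g))" for n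
  proof -
    have "Q n \<subseteq> X"
      using assms(4)[of n] assms(5)[of n] by (auto simp: graph_pattern_def)
    then have "card (Q n) \<le> grid_count (\<epsilon> n) (graph_on X g)"
      using assms(4)[of n] assms(1,6) bounded_uniformly_continuous_image[OF assms(2,1)]
      by (intro card_le_grid_count_graph) (auto simp: graph_pattern_def)
    then show ?thesis
      using assms(4)[of n] unfolding graph_pattern_def by linarith
  qed
qed

lemma graph_patterns_near_imp_shrinking_patterns:
  assumes "graph_patterns_near c X p"
  obtains rad \<epsilon> Q Y where "decseq rad" "\<And>n. 0 < rad n" "\<And>n. rad n \<le> 1 / real (Suc n)"
    "\<And>n. \<epsilon> n < 1 / real (Suc n)"
    "\<And>n. graph_pattern c (1 / real (Suc n)) (X \<inter> ball p (rad n) - {p}) (\<epsilon> n) (Q n) (Y n)"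
    "\<And>n x. x \<in> Q n \<Longrightarrow> rad (Suc n) \<le> dist x p"
proof -
  let ?A = "\<lambda>r. X \<inter> ball p r - {p}"
  have "\<forall>n r. \<exists>\<epsilon> P y. 0 < r \<longrightarrow>
      \<epsilon> < 1 / real (Suc n) \<and> graph_pattern c (1 / real (Suc n)) (?A r) \<epsilon> P y"
    using assms unfolding graph_patterns_near_def by simp
  then obtain E P Y where pat: "\<And>n r. 0 < r \<Longrightarrow>
      E n r < 1 / real (Suc n) \<and> graph_pattern c (1 / real (Suc n)) (?A r) (E n r) (P n r) (Y n r)"
    by metis
  have "finite (P n r) \<and> p \<notin> P n r" if "0 < r" for n r
    using pat[OF that] graph_pattern_finite[of c "1 / real (Suc n)" "?A r" "E n r" "P n r" "Y n r"]
    by (auto simp: graph_pattern_def)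
  then obtain rad where rad: "\<And>n. 0 < rad n" "\<And>n. rad n \<le> 1 / real (Suc n)" "decseq rad"
    "\<And>n x. x \<in> P n (rad n) \<Longrightarrow> rad (Suc n) \<le> dist x p"
    using ex_shrinking_radii[of P p] by blast
  show thesis
    using that[of rad "\<lambda>n. E n (rad n)" "\<lambda>n. P n (rad n)" "\<lambda>n. Y n (rad n)"] rad pat[OF rad(1)]
    by blast
qed

lemma graph_patterns_near_imp_ex_graph:
  fixes X :: "real set"
  assumes "bounded X" "graph_patterns_near c X p"
  obtains f :: "real \<Rightarrow> real"
  where "uniformly_continuous_on X f" "ereal c \<le> upper_box_dim (graph_on X f)"
proof -
  obtain rad \<epsilon> Q Y where rad: "decseq rad" "\<And>n. 0 < rad n" "\<And>n. rad n \<le> 1 / real (Suc n)"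
    and Q: "\<And>n. \<epsilon> n < 1 / real (Suc n)"
      "\<And>n. graph_pattern c (1 / real (Suc n)) (X \<inter> ball p (rad n) - {p}) (\<epsilon> n) (Q n) (Y n)"
      "\<And>n x. x \<in> Q n \<Longrightarrow> rad (Suc n) \<le> dist x p"
    using graph_patterns_near_imp_shrinking_patterns[OF assms(2)] by blast
  obtain g where g: "continuous_on UNIV g" "\<And>n x. x \<in> Q n \<Longrightarrow> g x = Y n x"
  proof (rule ex_continuous_extension_shrinking_pieces[OF _ rad])
    show "finite (Q n)" for n
      using Q(2) by (rule graph_pattern_finite)
    show "rad (Suc n) \<le> dist x p \<and> dist x p < rad n" if "x \<in> Q n" for n x
    proof
      show "rad (Suc n) \<le> dist x p"
        using that by (rule Q(3))
      have "x \<in> ball p (rad n)"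
        using that Q(2)[of n] by (auto simp: graph_pattern_def)
      then show "dist x p < rad n"
        by (simp add: dist_commute)
    qed
    show "\<bar>Y n x\<bar> \<le> 1 / real (Suc n)" if "x \<in> Q n" for n x
      using that Q(2)[of n] by (simp add: graph_pattern_def)
  qed blast
  have uc: "uniformly_continuous_on X g"
    using g(1) assms(1) by (rule continuous_on_UNIV_imp_uniformly_continuous_on_bounded)
  have "\<epsilon> \<longlonglongrightarrow> 0"
  proof (rule tendsto_sandwich[OF _ _ tendsto_const LIMSEQ_inverse_real_of_nat])
    show "eventually (\<lambda>n. 0 \<le> \<epsilon> n) sequentially"
      using Q(2) by (simp add: graph_pattern_def less_imp_le)
    show "eventually (\<lambda>n. \<epsilon> n \<le> inverse (real (Suc n))) sequentially"
      using Q(1) by (simp add: inverse_eq_divide less_imp_le)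
  qed
  then have "ereal c \<le> upper_box_dim (graph_on X g)"
    by (rule upper_box_dim_graph_ge_if_patterns[OF assms(1) uc _ Q(2)]) (use g(2) in auto)
  with uc show thesis
    by (rule that)
qed

section \<open>Constructing patterns\<close>

lemma real_nat_ceiling_less: "0 \<le> x \<Longrightarrow> real (nat \<lceil>x\<rceil>) < x + 1"
  by simp linarith

lemma graph_pattern_staircase:
  assumes "infinite S" "0 < \<epsilon>" "\<epsilon> powr (1 - c) \<le> h"
  obtains P y where "graph_pattern c h S \<epsilon> P y"
proof -
  define m where "m = nat \<lceil>\<epsilon> powr (- c)\<rceil>"
  obtain P where P: "finite P" "card P = m" "P \<subseteq> S"
    using infinite_arbitrarily_large[OF assms(1)] by blast
  then obtain idx where idx: "bij_betw idx P {0..<m}"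
    using ex_bij_betw_finite_nat by blast
  have "graph_pattern c h S \<epsilon> P (\<lambda>x. \<epsilon> * of_int (int (idx x)))"
    unfolding graph_pattern_def
  proof (intro conjI ballI)
    show "P \<subseteq> S" "0 < \<epsilon>"
      by (fact P(3), fact assms(2))
    fix x assume "x \<in> P"
    then have "idx x < m"
      using idx by (auto simp: bij_betw_def)
    then have "real (idx x) + 1 \<le> real m"
      by linarith
    also have "\<dots> < \<epsilon> powr (- c) + 1"
      unfolding m_def by (rule real_nat_ceiling_less) simp
    finally have "\<epsilon> * real (idx x) \<le> \<epsilon> * \<epsilon> powr (- c)"
      using assms(2) by simp
    also have "\<dots> = \<epsilon> powr (1 - c)"
      using assms(2) by (simp add: powr_diff powr_minus field_simps)
    finally show "\<bar>\<epsilon> * of_int (int (idx x))\<bar> \<le> h"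
      using assms(2,3) by simp
  next
    show "graph_separated \<epsilon> P (\<lambda>x. \<epsilon> * of_int (int (idx x)))"
      using assms(2) idx by (intro graph_separated_int_multiple) (auto simp: bij_betw_def inj_on_def)
    show "\<epsilon> powr (- c) \<le> real (card P)"
      unfolding P(2) m_def by (rule real_nat_ceiling_ge)
  qed
  then show thesis
    by (rule that)
qed

lemma graph_patterns_near_if_islimpt:
  fixes X :: "real set"
  assumes "p islimpt X" "c < 1"
  shows "graph_patterns_near c X p"
  unfolding graph_patterns_near_def
proof (intro allI impI)
  fix r h t :: real
  assume "0 < r" "0 < h" "0 < t"
  have "eventually (\<lambda>\<epsilon>. \<epsilon> powr (1 - c) < h) (at_right 0)"
    using assms(2) \<open>0 < h\<close> by (intro eventually_powr_less_at_right_0) auto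
  with eventually_at_right_real[OF \<open>0 < t\<close>]
  have "eventually (\<lambda>\<epsilon>. 0 < \<epsilon> \<and> \<epsilon> < t \<and> \<epsilon> powr (1 - c) < h) (at_right 0)"
    by eventually_elim auto
  then obtain \<epsilon> where \<epsilon>: "0 < \<epsilon>" "\<epsilon> < t" "\<epsilon> powr (1 - c) < h"
    using eventually_happens'[OF trivial_limit_at_right_real] by blast
  have "infinite (X \<inter> ball p r)"
    using assms(1) \<open>0 < r\<close> by (simp add: islimpt_eq_infinite_ball Int_commute)
  then have "infinite (X \<inter> ball p r - {p})"
    by simp
  then obtain P y where "graph_pattern c h (X \<inter> ball p r - {p}) \<epsilon> P y"
    using graph_pattern_staircase \<epsilon>(1) less_imp_le[OF \<epsilon>(3)] by blast
  with \<epsilon>(2) show "\<exists>\<epsilon> P y. \<epsilon> < t \<and> graph_pattern c h (X \<inter> ball p r - {p}) \<epsilon> P y"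
    by blast
qed

lemma ex_same_parity_subset:
  fixes K :: "int set"
  assumes "finite K"
  obtains L where "L \<subseteq> K" "\<And>k k'. k \<in> L \<Longrightarrow> k' \<in> L \<Longrightarrow> even k = even k'"
    "card K \<le> 2 * card L"
proof -
  let ?E = "{k \<in> K. even k}" and ?O = "{k \<in> K. odd k}"
  have "card (?E \<union> ?O) = card ?E + card ?O"
    using assms by (intro card_Un_disjoint) auto
  moreover have "?E \<union> ?O = K"
    by blast
  ultimately have "card K = card ?E + card ?O"
    by simp
  show thesis
  proof (cases "card ?O \<le> card ?E")
    case True
    show thesis
      by (rule that[of ?E]) (use True \<open>card K = _\<close> in auto)
  next
    case False
    show thesis
      by (rule that[of ?O]) (use False \<open>card K = _\<close> in auto)
  qed
qed

lemma two_mult_le_abs_diff_if_same_class: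
  fixes k k' M :: int
  assumes "k \<noteq> k'" "even k = even k'" "(k div 2) mod M = (k' div 2) mod M"
  shows "2 * M \<le> \<bar>k - k'\<bar>"
proof -
  have "k mod 2 = k' mod 2"
    using assms(2) by (simp add: mod2_eq_if)
  have "k - k' = (2 * (k div 2) + k mod 2) - (2 * (k' div 2) + k' mod 2)"
    by simp
  also have "\<dots> = 2 * (k div 2 - k' div 2)"
    using \<open>k mod 2 = k' mod 2\<close> by (simp add: algebra_simps)
  finally have diff: "k - k' = 2 * (k div 2 - k' div 2)" .
  then have "k div 2 \<noteq> k' div 2"
    using assms(1) by auto
  have "M dvd (k div 2 - k' div 2)"
    using assms(3) by (simp add: mod_eq_dvd_iff)
  then have "\<bar>M\<bar> \<le> \<bar>k div 2 - k' div 2\<bar>"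
    using \<open>k div 2 \<noteq> k' div 2\<close> by (intro dvd_imp_le_int) auto
  then show ?thesis
    unfolding diff by (simp add: abs_mult)
qed

lemma ex_same_parity_grid_representatives:
  fixes A :: "real set"
  assumes "bounded A" "0 < \<eta>"
  obtains P where "P \<subseteq> A" "inj_on (\<lambda>x. \<lfloor>x / \<eta>\<rfloor>) P"
    "\<And>x x'. x \<in> P \<Longrightarrow> x' \<in> P \<Longrightarrow> even \<lfloor>x / \<eta>\<rfloor> = even \<lfloor>x' / \<eta>\<rfloor>"
    "grid_count \<eta> A \<le> 2 * card P"
proof -
  obtain L where L: "L \<subseteq> (\<lambda>x. \<lfloor>x / \<eta>\<rfloor>) ` A" "\<And>k k'. k \<in> L \<Longrightarrow> k' \<in> L \<Longrightarrow> even k = even k'"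
    "card ((\<lambda>x. \<lfloor>x / \<eta>\<rfloor>) ` A) \<le> 2 * card L"
    using ex_same_parity_subset[OF finite_floor_image[OF assms]] by blast
  obtain P where P: "P \<subseteq> A" "inj_on (\<lambda>x. \<lfloor>x / \<eta>\<rfloor>) P" "L = (\<lambda>x. \<lfloor>x / \<eta>\<rfloor>) ` P"
    using L(1) unfolding subset_image_inj by blast
  show thesis
  proof (rule that[OF P(1,2)])
    show "even \<lfloor>x / \<eta>\<rfloor> = even \<lfloor>x' / \<eta>\<rfloor>" if "x \<in> P" "x' \<in> P" for x x'
      using L(2) P(3) that by blast
    show "grid_count \<eta> A \<le> 2 * card P"
      using L(3) card_image[OF P(2)] by (simp add: P(3) grid_count_real[OF assms(2)])
  qed
qed

lemma graph_separated_floor_class: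
  fixes P :: "real set"
  assumes "0 < \<eta>" "1 \<le> M" "0 \<le> \<epsilon>" "\<epsilon> \<le> real M * \<eta>" "inj_on (\<lambda>x. \<lfloor>x / \<eta>\<rfloor>) P"
    and "\<And>x x'. x \<in> P \<Longrightarrow> x' \<in> P \<Longrightarrow> even \<lfloor>x / \<eta>\<rfloor> = even \<lfloor>x' / \<eta>\<rfloor>"
  shows "graph_separated \<epsilon> P (\<lambda>x. \<epsilon> * of_int ((\<lfloor>x / \<eta>\<rfloor> div 2) mod int M))"
proof (rule graph_separated_int_multiple[OF assms(3)])
  fix x x' assume x: "x \<in> P" "x' \<in> P" "x \<noteq> x'"
    and same_class: "(\<lfloor>x / \<eta>\<rfloor> div 2) mod int M = (\<lfloor>x' / \<eta>\<rfloor> div 2) mod int M"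
  have "\<lfloor>x / \<eta>\<rfloor> \<noteq> \<lfloor>x' / \<eta>\<rfloor>"
    using assms(5) x by (auto dest: inj_onD)
  then have "2 * int M \<le> \<bar>\<lfloor>x / \<eta>\<rfloor> - \<lfloor>x' / \<eta>\<rfloor>\<bar>"
    using assms(6)[OF x(1,2)] same_class by (rule two_mult_le_abs_diff_if_same_class)
  then have "(2 * real M - 1) * \<eta> \<le> (of_int \<bar>\<lfloor>x / \<eta>\<rfloor> - \<lfloor>x' / \<eta>\<rfloor>\<bar> - 1) * \<eta>"
    using assms(1) by (intro mult_right_mono) linarith+
  also have "\<dots> < \<bar>x - x'\<bar>"
    using assms(1) by (rule dist_gt_of_floor_diff)
  finally have "(2 * real M - 1) * \<eta> < \<bar>x - x'\<bar>" .
  moreover have "real M * \<eta> \<le> (2 * real M - 1) * \<eta>"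
    using assms(1,2) by (intro mult_right_mono) auto
  ultimately show "\<epsilon> \<le> \<bar>x - x'\<bar>"
    using assms(4) by linarith
qed

lemma abs_mult_of_int_mod_le:
  fixes \<epsilon> :: real and M :: nat and k :: int
  assumes "0 \<le> \<epsilon>" "1 \<le> M"
  shows "\<bar>\<epsilon> * of_int (k mod int M)\<bar> \<le> \<epsilon> * (real M - 1)"
proof -
  have "0 \<le> k mod int M" "k mod int M < int M"
    using assms(2) by simp_all
  then have "0 \<le> real_of_int (k mod int M)" "real_of_int (k mod int M) \<le> real M - 1"
    by linarith+
  then show ?thesis
    using assms(1) by (simp add: abs_mult mult_left_mono)
qed

lemma graph_pattern_at_grid_scale:
  fixes A :: "real set"
  assumes "bounded A" "0 < \<eta>" "\<eta> powr (2 * \<gamma> - 1) \<le> h" "\<eta> powr (b - c * \<gamma>) \<le> 1 / 2"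
    and count: "\<eta> powr (- b) \<le> real (grid_count \<eta> A)"
  obtains P y where "graph_pattern c h A (\<eta> powr \<gamma>) P y"
proof -
  obtain P where P: "P \<subseteq> A" "inj_on (\<lambda>x. \<lfloor>x / \<eta>\<rfloor>) P"
    "\<And>x x'. x \<in> P \<Longrightarrow> x' \<in> P \<Longrightarrow> even \<lfloor>x / \<eta>\<rfloor> = even \<lfloor>x' / \<eta>\<rfloor>"
    "grid_count \<eta> A \<le> 2 * card P"
    by (rule ex_same_parity_grid_representatives[OF assms(1,2)], rule that)
  define \<epsilon> where "\<epsilon> = \<eta> powr \<gamma>"
  define M where "M = nat \<lceil>\<eta> powr (\<gamma> - 1)\<rceil>"
  have M: "\<eta> powr (\<gamma> - 1) \<le> real M" "real M < \<eta> powr (\<gamma> - 1) + 1"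
    unfolding M_def by (simp_all only: real_nat_ceiling_ge real_nat_ceiling_less powr_ge_zero)
  moreover have "0 < \<eta> powr (\<gamma> - 1)"
    using assms(2) by simp
  ultimately have "1 \<le> M"
    by linarith
  have "0 < \<epsilon>"
    using assms(2) by (simp add: \<epsilon>_def)
  have \<epsilon>_eq: "\<epsilon> = \<eta> powr (\<gamma> - 1) * \<eta>"
    using assms(2) by (simp add: \<epsilon>_def powr_diff)
  have "graph_pattern c h A \<epsilon> P (\<lambda>x. \<epsilon> * of_int ((\<lfloor>x / \<eta>\<rfloor> div 2) mod int M))"
    unfolding graph_pattern_def
  proof (intro conjI ballI)
    show "P \<subseteq> A" "0 < \<epsilon>"
      by (fact P(1), fact \<open>0 < \<epsilon>\<close>)
    have "\<epsilon> \<le> real M * \<eta>"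
      unfolding \<epsilon>_eq using M(1) assms(2) by (intro mult_right_mono) simp_all
    then show "graph_separated \<epsilon> P (\<lambda>x. \<epsilon> * of_int ((\<lfloor>x / \<eta>\<rfloor> div 2) mod int M))"
      using \<open>0 < \<epsilon>\<close> by (intro graph_separated_floor_class[OF assms(2) \<open>1 \<le> M\<close> _ _ P(2,3)]) simp_all
  next
    fix x
    have "\<bar>\<epsilon> * of_int ((\<lfloor>x / \<eta>\<rfloor> div 2) mod int M)\<bar> \<le> \<epsilon> * (real M - 1)"
      using \<open>0 < \<epsilon>\<close> \<open>1 \<le> M\<close> by (intro abs_mult_of_int_mod_le) simp_all
    also have "\<dots> \<le> \<epsilon> * \<eta> powr (\<gamma> - 1)"
      using M(2) \<open>0 < \<epsilon>\<close> by (intro mult_left_mono) simp_all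
    also have "\<dots> = \<eta> powr (2 * \<gamma> - 1)"
      unfolding \<epsilon>_def by (subst powr_add[symmetric]) simp
    finally show "\<bar>\<epsilon> * of_int ((\<lfloor>x / \<eta>\<rfloor> div 2) mod int M)\<bar> \<le> h"
      using assms(3) by linarith
  next
    have "\<epsilon> powr (- c) = \<eta> powr (- (c * \<gamma>))"
      unfolding \<epsilon>_def by (simp add: powr_powr mult.commute)
    also have "\<dots> = \<eta> powr (b - c * \<gamma>) * \<eta> powr (- b)"
      by (subst powr_add[symmetric]) simp
    also have "\<dots> \<le> 1 / 2 * real (grid_count \<eta> A)"
      using assms(4) count by (intro mult_mono) simp_all
    also have "\<dots> \<le> real (card P)"
      using P(4) by linarith
    finally show "\<epsilon> powr (- c) \<le> real (card P)" .
  qed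
  then show thesis
    unfolding \<epsilon>_def by (rule that)
qed

lemma graph_patterns_near_if_local_dim_gt:
  fixes X :: "real set"
  assumes "bounded X" "0 < c" "c < 2 * b"
    and local_dim: "\<And>r. r > 0 \<Longrightarrow> ereal b < upper_box_dim (X \<inter> ball p r - {p})"
  shows "graph_patterns_near c X p"
  unfolding graph_patterns_near_def
proof (intro allI impI)
  fix r h t :: real
  assume "0 < r" "0 < h" "0 < t"
  let ?A = "X \<inter> ball p r - {p}"
  \<comment> \<open>\<open>\<gamma> > 1/2\<close> makes the height \<open>\<eta>\<^sup>2\<^sup>\<gamma>\<^sup>-\<^sup>1\<close> small, and \<open>c\<gamma> < b\<close> lets the
    \<open>\<eta>\<^sup>-\<^sup>b/2\<close> representatives outnumber \<open>\<epsilon>\<^sup>-\<^sup>c = \<eta>\<^sup>-\<^sup>c\<^sup>\<gamma>\<close>.\<close>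
  define \<gamma> where "\<gamma> = (b / c + 1 / 2) / 2"
  have "0 < b"
    using assms(2,3) by linarith
  have \<gamma>: "1 / 2 < \<gamma>" "c * \<gamma> < b"
    using assms(2,3) by (simp_all add: \<gamma>_def field_simps)
  have "eventually (\<lambda>\<eta>. \<eta> powr \<gamma> < t) (at_right 0)"
    using \<gamma> \<open>0 < t\<close> by (intro eventually_powr_less_at_right_0) simp_all
  moreover have "eventually (\<lambda>\<eta>. \<eta> powr (2 * \<gamma> - 1) < h) (at_right 0)"
    using \<gamma> \<open>0 < h\<close> by (intro eventually_powr_less_at_right_0) simp_all
  moreover have "eventually (\<lambda>\<eta>. \<eta> powr (b - c * \<gamma>) < 1 / 2) (at_right 0)"
    using \<gamma> by (intro eventually_powr_less_at_right_0) simp_all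
  ultimately have "eventually (\<lambda>\<eta>. 0 < \<eta> \<and> \<eta> powr \<gamma> < t
      \<and> \<eta> powr (2 * \<gamma> - 1) < h \<and> \<eta> powr (b - c * \<gamma>) < 1 / 2) (at_right 0)"
    using eventually_at_right_0_less_1 by eventually_elim simp
  moreover have "\<exists>\<^sub>F \<eta> in at_right 0. \<eta> powr (- b) < real (grid_count \<eta> ?A)"
    using \<open>0 < b\<close> local_dim[OF \<open>0 < r\<close>] by (intro frequently_powr_less_grid_count) auto
  ultimately have "\<exists>\<^sub>F \<eta> in at_right 0. (0 < \<eta> \<and> \<eta> powr \<gamma> < t
      \<and> \<eta> powr (2 * \<gamma> - 1) < h \<and> \<eta> powr (b - c * \<gamma>) < 1 / 2)
      \<and> \<eta> powr (- b) < real (grid_count \<eta> ?A)"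
    by (rule frequently_eventually_conj[rotated])
  then obtain \<eta> where \<eta>: "0 < \<eta>" "\<eta> powr \<gamma> < t" "\<eta> powr (2 * \<gamma> - 1) < h"
      "\<eta> powr (b - c * \<gamma>) < 1 / 2" "\<eta> powr (- b) < real (grid_count \<eta> ?A)"
    by (rule frequentlyE) blast
  have "bounded ?A"
    using assms(1) by (rule bounded_subset) blast
  then obtain P y where "graph_pattern c h ?A (\<eta> powr \<gamma>) P y"
    using graph_pattern_at_grid_scale \<eta>(1) less_imp_le[OF \<eta>(3)] less_imp_le[OF \<eta>(4)]
      less_imp_le[OF \<eta>(5)] by blast
  with \<eta>(2) show "\<exists>\<epsilon> P y. \<epsilon> < t \<and> graph_pattern c h ?A \<epsilon> P y"
    by (intro exI conjI)
qed

lemma upper_graph_box_dim_le: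
  fixes X :: "real set"
  assumes "bounded X"
  shows "upper_graph_box_dim X \<le> upper_box_dim X + 1"
  unfolding upper_graph_box_dim_def
  using upper_box_dim_graph_le[OF assms] by (auto intro: SUP_least)

lemma upper_graph_box_dim_ge_if_patterns_near:
  fixes X :: "real set"
  assumes "bounded X" "graph_patterns_near c X p"
  shows "ereal c \<le> upper_graph_box_dim X"
proof -
  obtain f :: "real \<Rightarrow> real" where "uniformly_continuous_on X f"
    "ereal c \<le> upper_box_dim (graph_on X f)"
    using graph_patterns_near_imp_ex_graph[OF assms] by blast
  then show ?thesis
    unfolding upper_graph_box_dim_def by (auto intro: SUP_upper2)
qed

lemma upper_graph_box_dim_ge:
  fixes X :: "real set"
  assumes "bounded X" "infinite X"
  shows "max 1 (2 * upper_box_dim X) \<le> upper_graph_box_dim X"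
proof -
  have real_below: "ereal c \<le> upper_graph_box_dim X"
    if c: "ereal c < max 1 (2 * upper_box_dim X)" for c
  proof (cases "c < 1")
    case True
    obtain z e where "X \<subseteq> cball z e"
      using assms(1) bounded_subset_cball by blast
    then obtain p where "p islimpt X"
      using Heine_Borel_imp_Bolzano_Weierstrass[OF compact_cball assms(2)] by blast
    then show ?thesis
      using True
      by (intro upper_graph_box_dim_ge_if_patterns_near[OF assms(1)] graph_patterns_near_if_islimpt)
  next
    case False
    then have "ereal c < 2 * upper_box_dim X"
      using c by (auto simp: max_def split: if_splits)
    obtain b where b: "c < 2 * b" "ereal b < upper_box_dim X"
    proof (cases "upper_box_dim X")
      case (real d)
      then show thesis
        using \<open>ereal c < 2 * upper_box_dim X\<close> by (intro that[of "(c / 2 + d) / 2"]) auto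
    next
      case PInf
      then show thesis
        using False by (intro that[of c]) auto
    qed (use \<open>ereal c < 2 * upper_box_dim X\<close> in auto)
    have "0 < c" "0 \<le> b"
      using False b(1) by linarith+
    obtain p where "\<And>r. r > 0 \<Longrightarrow> ereal b < upper_box_dim (X \<inter> ball p r - {p})"
      using ex_point_local_upper_box_dim[OF assms(1) \<open>0 \<le> b\<close> b(2)] by blast
    then show ?thesis
      using assms(1) \<open>0 < c\<close> b(1)
      by (intro upper_graph_box_dim_ge_if_patterns_near[OF assms(1)]
          graph_patterns_near_if_local_dim_gt)
  qed
  show ?thesis
  proof (rule dense_le)
    fix y assume y: "y < max 1 (2 * upper_box_dim X)"
    show "y \<le> upper_graph_box_dim X"
    proof (cases y)
      case (real c)
      then show ?thesis
        using y real_below by blast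
    qed (use y in auto)
  qed
qed

theorem corollary3:
  fixes X :: "real set" and a :: ereal
  assumes "X \<subseteq> {0..1}" and "infinite X"
    and "upper_box_dim X = a"
  shows "max 1 (2 * a) \<le> upper_graph_box_dim X \<and> upper_graph_box_dim X \<le> a + 1"
proof -
  have "bounded X"
    using bounded_closed_interval assms(1) by (rule bounded_subset)
  then show ?thesis
    using upper_graph_box_dim_ge[OF \<open>bounded X\<close> assms(2)] upper_graph_box_dim_le[OF \<open>bounded X\<close>]
      assms(3) by simp
qed

end
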